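(* Let $f\in X$ and $\alpha\in\mathbb{R}\setminus\{0\}$, and define $h:\mathbb{R}^3\to\mathbb{C}$ by \[ h(x):=(1+|x|)^{-1-\frac i\alpha}f\Big(\frac{|x|-1}{|x|+1}\Big). \] Then $h\in L^4(\mathbb{R}^3)\cap\dot H^1(\mathbb{R}^3)$.
   Context: $X$ is the space of all $f\in C([-1,1])\cap C^1(-1,1)$ (complex valued) such that $y\mapsto(1-y^2)f'(y)$ extends to a continuous function on $[-1,1]$, with norm $\|f\|_X:=\sup_{y\in(-1,1)}(1-y^2)|f'(y)|+\|f\|_{L^\infty(-1,1)}$. For $r\ge0$, $(1+r)^{-1-\frac i\alpha}:=\exp(-(1+\frac i\alpha)\log(1+r))$. *)

theory Defs
  imports "HOL-Analysis.Analysis"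
begin

definition X_space :: "(real \<Rightarrow> complex) set" where
  "X_space = {f. continuous_on {-1..1} f
      \<and> (\<forall>y\<in>{-1<..<1}. f differentiable (at y))
      \<and> continuous_on {-1<..<1} (\<lambda>y. vector_derivative f (at y))
      \<and> (\<exists>g. continuous_on {-1..1} g
             \<and> (\<forall>y\<in>{-1<..<1}. g y = complex_of_real (1 - y\<^sup>2) * vector_derivative f (at y)))}"

text \<open>Infinitely differentiable real functions on R^3 (all iterated partial
  derivatives exist everywhere).\<close>
coinductive smooth3 :: "(real^3 \<Rightarrow> real) \<Rightarrow> bool" where
  "(\<forall>x. f differentiable (at x)) \<Longrightarrow>
   (\<forall>i. smooth3 (\<lambda>x. frechet_derivative f (at x) (axis i 1))) \<Longrightarrow> smooth3 f"

definition test_fun3 :: "(real^3 \<Rightarrow> real) \<Rightarrow> bool" where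
  "test_fun3 \<phi> \<longleftrightarrow> smooth3 \<phi> \<and> compact (closure {x. \<phi> x \<noteq> 0})"

definition Lp3 :: "real \<Rightarrow> (real^3 \<Rightarrow> complex) set" where
  "Lp3 p = {h. h \<in> borel_measurable lborel \<and> integrable lborel (\<lambda>x. norm (h x) powr p)}"

definition Hdot1_3 :: "(real^3 \<Rightarrow> complex) set" where
  "Hdot1_3 = {h. h \<in> borel_measurable lborel
     \<and> (\<forall>K. compact K \<longrightarrow> set_integrable lborel K h)
     \<and> (\<exists>G :: 3 \<Rightarrow> real^3 \<Rightarrow> complex. \<forall>j. G j \<in> Lp3 2
          \<and> (\<forall>\<phi>. test_fun3 \<phi> \<longrightarrow>
               integral\<^sup>L lborel (\<lambda>x. h x * complex_of_real (frechet_derivative \<phi> (at x) (axis j 1)))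
               = - integral\<^sup>L lborel (\<lambda>x. G j x * complex_of_real (\<phi> x))))}"

text \<open>(1+r)^(-1-i/alpha) := exp(-(1+i/alpha) log(1+r)).\<close>
definition cpow_weight :: "real \<Rightarrow> real \<Rightarrow> complex" where
  "cpow_weight \<alpha> r = exp (- (1 + \<i> / complex_of_real \<alpha>) * complex_of_real (ln (1 + r)))"

end

(*
  Write h x = H |x| with H rho = (1 + rho) powr (-1 - i/alpha) * f ((rho - 1) / (rho + 1)).
  Since |(1 + rho) powr (-1 - i/alpha)| = 1/(1 + rho) and f is bounded, |H rho| <= M/(1 + rho).
  Writing y = (rho - 1)/(rho + 1), one has dy/drho = 2/(1 + rho)^2 and 1 - y^2 = 4 rho/(1 + rho)^2,
  so the boundedness of (1 - y^2) f'(y) gives |H' rho| <= A/(rho (1 + rho)).  Hence |h|^4 and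
  |grad h|^2 are dominated by multiples of D x = (|x| (1 + |x|))^-2, and D is integrable on R^3
  because |x_i| <= |x| bounds it by the product of the integrable one-dimensional functions
  (|x_i| (1 + |x_i|)) powr (-2/3).  The weak derivative is obtained by integrating by parts the
  smooth regularisations x |-> H (sqrt (|x|^2 + eps^2)) along coordinate lines and letting eps
  tend to 0 by dominated convergence.
*)
theory Submission
  imports Defs
begin

section \<open>Integration by parts along lines\<close>

lemma integrable_continuous_compact_support:
  fixes F :: "'a::euclidean_space \<Rightarrow> 'b::{banach, second_countable_topology}"
  assumes "continuous_on UNIV F" "compact K" "\<And>x. x \<notin> K \<Longrightarrow> F x = 0"
  shows "integrable lborel F"
proof -
  have "integrable lborel (\<lambda>x. indicator K x *\<^sub>R F x)"
    using assms by (intro borel_integrable_compact) (auto intro: continuous_on_subset)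
  also have "(\<lambda>x. indicator K x *\<^sub>R F x) = F"
    using assms(3) by (auto simp: indicator_def)
  finally show ?thesis .
qed

lemma lborel_integral_translate:
  fixes F :: "'a::euclidean_space \<Rightarrow> 'b::{banach, second_countable_topology}"
  assumes "F \<in> borel_measurable borel"
  shows "integral\<^sup>L lborel (\<lambda>x. F (x + c)) = integral\<^sup>L lborel F"
proof -
  have "integral\<^sup>L lborel F = integral\<^sup>L (distr lborel borel ((+) c)) F"
    by (simp add: lborel_distr_plus)
  also have "\<dots> = integral\<^sup>L lborel (\<lambda>x. F (c + x))"
    using assms by (intro integral_distr) auto
  finally show ?thesis by (simp add: add.commute)
qed

lemma has_vector_derivative_tendsto_difference_quotient:
  assumes "(g has_vector_derivative D) (at x)"
  shows "((\<lambda>t. (g (x + t) - g x) /\<^sub>R t) \<longlongrightarrow> D) (at 0)"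
proof -
  have lim: "((\<lambda>t. norm (g (x + t) - g x - t *\<^sub>R D) / \<bar>t\<bar>) \<longlongrightarrow> 0) (at 0)"
    using assms by (simp add: has_vector_derivative_def has_derivative_at)
  have eq: "norm (g (x + t) - g x - t *\<^sub>R D) / \<bar>t\<bar> = norm ((g (x + t) - g x) /\<^sub>R t - D)"
    if "t \<noteq> 0" for t
  proof -
    have "(g (x + t) - g x) /\<^sub>R t - D = (g (x + t) - g x - t *\<^sub>R D) /\<^sub>R t"
      using that by (simp add: algebra_simps)
    then show ?thesis by (simp add: divide_inverse_commute)
  qed
  have "((\<lambda>t. norm ((g (x + t) - g x) /\<^sub>R t - D)) \<longlongrightarrow> 0) (at 0)"
    by (rule Lim_transform_eventually[OF lim]) (auto simp: eventually_at_filter eq)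
  then show ?thesis
    by (simp add: tendsto_norm_zero_iff LIM_zero_iff)
qed

lemma norm_diff_le_vector_derivative_bound:
  fixes g :: "real \<Rightarrow> 'a::real_normed_vector"
  assumes "\<And>s. (g has_vector_derivative g' s) (at s)" and "\<And>s. norm (g' s) \<le> B"
  shows "norm (g b - g a) \<le> B * \<bar>b - a\<bar>"
  using differentiable_bound[of UNIV g "\<lambda>s h. h *\<^sub>R g' s" B b a] assms
  by (simp add: has_vector_derivative_def onorm_scaleR_left bounded_linear_ident onorm_id)

lemma line_derivative_eq_0_outside:
  fixes p :: "'a::real_normed_vector \<Rightarrow> 'b::real_normed_vector"
  assumes "closed K" and "\<And>y. y \<notin> K \<Longrightarrow> p y = 0" and "x \<notin> K"
    and "((\<lambda>s. p (x + s *\<^sub>R e)) has_vector_derivative D) (at 0)"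
  shows "D = 0"
proof -
  let ?U = "(\<lambda>s. x + s *\<^sub>R e) -` (- K)"
  have "open ?U"
    using assms(1) by (intro open_vimage) (auto intro!: continuous_intros)
  then have "((\<lambda>s. p (x + s *\<^sub>R e)) has_vector_derivative 0) (at 0)"
    using assms(2,3)
    by (intro has_vector_derivative_transform_within_open[OF has_vector_derivative_const \<open>open ?U\<close>]) auto
  with assms(4) show ?thesis by (rule vector_derivative_unique_at)
qed

lemma integral_line_derivative_eq_0:
  fixes p dp :: "'a::euclidean_space \<Rightarrow> 'b::{banach, second_countable_topology}"
  assumes p: "continuous_on UNIV p" and dp: "continuous_on UNIV dp"
    and K: "compact K" "\<And>x. x \<notin> K \<Longrightarrow> p x = 0"
    and deriv: "\<And>x s. ((\<lambda>s. p (x + s *\<^sub>R e)) has_vector_derivative dp (x + s *\<^sub>R e)) (at s)"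
  shows "integral\<^sup>L lborel dp = 0"
proof -
  \<comment> \<open>The difference quotients \<open>Q n\<close> of \<open>p\<close> along \<open>e\<close> have integral 0 by translation
    invariance; they tend to \<open>dp\<close> and are dominated by a multiple of the indicator of \<open>K1\<close>.\<close>
  have dp0: "dp x = 0" if "x \<notin> K" for x
    using line_derivative_eq_0_outside[OF compact_imp_closed[OF K(1)] K(2) that] deriv[of x 0] by simp
  obtain B where "\<forall>y\<in>dp ` K. norm y \<le> B"
    using compact_imp_bounded[OF compact_continuous_image[OF continuous_on_subset[OF dp] K(1)]]
    by (auto simp: bounded_iff)
  then have B: "norm (dp x) \<le> max B 0" for x
    using dp0 by (cases "x \<in> K") force+
  define K1 where "K1 = (\<lambda>(y, t). y - t *\<^sub>R e) ` (K \<times> {-1..1})"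
  have "compact K1"
    unfolding K1_def case_prod_unfold
    by (intro compact_continuous_image compact_Times K(1) compact_Icc continuous_intros)
  have in_K1: "x \<in> K1" if "x + t *\<^sub>R e \<in> K" "\<bar>t\<bar> \<le> 1" for x t
    unfolding K1_def using that by (intro image_eqI[of _ _ "(x + t *\<^sub>R e, t)"]) auto
  define t :: "nat \<Rightarrow> real" where "t n = inverse (real (Suc n))" for n
  have t: "0 < t n" "t n \<le> 1" for n
    by (auto simp: t_def field_simps)
  define Q where "Q n x = (p (x + t n *\<^sub>R e) - p x) /\<^sub>R t n" for n x
  have p_meas: "p \<in> borel_measurable borel"
    using p by (rule borel_measurable_continuous_onI)
  have "integral\<^sup>L lborel (Q n) = 0" for n
  proof -
    have "integrable lborel p"
      using p K by (rule integrable_continuous_compact_support)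
    moreover have "integrable lborel (\<lambda>x. p (x + t n *\<^sub>R e))"
      using \<open>compact K1\<close> in_K1 t[of n] K(2)
      by (intro integrable_continuous_compact_support continuous_on_compose2[OF p])
        (auto intro!: continuous_intros, metis abs_of_pos less_imp_le)
    ultimately show ?thesis
      unfolding Q_def using lborel_integral_translate[OF p_meas] by simp
  qed
  then have "(\<lambda>n. integral\<^sup>L lborel (Q n)) \<longlonglongrightarrow> 0"
    by simp
  moreover have "(\<lambda>n. integral\<^sup>L lborel (Q n)) \<longlonglongrightarrow> integral\<^sup>L lborel dp"
  proof (rule integral_dominated_convergence[where w="\<lambda>x. max B 0 * indicator K1 x"])
    show "dp \<in> borel_measurable lborel"
      using dp by (simp add: borel_measurable_continuous_onI)
    show "Q n \<in> borel_measurable lborel" for n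
    proof -
      have "continuous_on UNIV (Q n)"
        unfolding Q_def by (intro continuous_intros continuous_on_compose2[OF p]) auto
      then show ?thesis by (simp add: borel_measurable_continuous_onI)
    qed
    show "integrable lborel (\<lambda>x. max B 0 * indicator K1 x)"
      using \<open>compact K1\<close>
      by (intro integrable_mult_right integrable_real_indicator)
        (auto intro: borel_closed compact_imp_closed emeasure_compact_finite[simplified])
    have "t \<longlonglongrightarrow> 0"
      unfolding t_def by (rule LIMSEQ_inverse_real_of_nat)
    then have t_at_0: "filterlim t (at 0) sequentially"
      using t(1) by (intro filterlim_atI) (auto simp: less_imp_neq[symmetric])
    have "(\<lambda>n. Q n x) \<longlonglongrightarrow> dp x" for x
      using filterlim_compose[OF has_vector_derivative_tendsto_difference_quotient[OF deriv[of x 0]] t_at_0]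
      by (simp add: Q_def)
    then show "AE x in lborel. (\<lambda>n. Q n x) \<longlonglongrightarrow> dp x"
      by simp
    show "AE x in lborel. norm (Q n x) \<le> max B 0 * indicator K1 x" for n
    proof (intro AE_I2)
      fix x
      have "norm (p (x + t n *\<^sub>R e) - p (x + 0 *\<^sub>R e)) \<le> max B 0 * \<bar>t n - 0\<bar>"
        using deriv B by (rule norm_diff_le_vector_derivative_bound)
      then have "norm (Q n x) \<le> max B 0"
        using t(1)[of n] by (simp add: Q_def divide_simps)
      moreover have "Q n x = 0" if "x \<notin> K1"
      proof -
        have "x + t n *\<^sub>R e \<notin> K" "x \<notin> K"
          using that in_K1[of x "t n"] in_K1[of x 0] t[of n] by auto
        then show ?thesis by (simp add: Q_def K(2))
      qed
      ultimately show "norm (Q n x) \<le> max B 0 * indicator K1 x"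
        by (cases "x \<in> K1") auto
    qed
  qed
  ultimately show ?thesis
    by (rule LIMSEQ_unique[symmetric])
qed

lemma integration_by_parts_along_line:
  fixes u du :: "'a::euclidean_space \<Rightarrow> complex" and \<phi> d\<phi> :: "'a \<Rightarrow> real"
  assumes u: "continuous_on UNIV u" "continuous_on UNIV du"
    and u_deriv: "\<And>x s. ((\<lambda>s. u (x + s *\<^sub>R e)) has_vector_derivative du (x + s *\<^sub>R e)) (at s)"
    and \<phi>: "continuous_on UNIV \<phi>" "continuous_on UNIV d\<phi>" "compact K" "\<And>x. x \<notin> K \<Longrightarrow> \<phi> x = 0"
    and \<phi>_deriv: "\<And>x s. ((\<lambda>s. \<phi> (x + s *\<^sub>R e)) has_real_derivative d\<phi> (x + s *\<^sub>R e)) (at s)"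
  shows "integral\<^sup>L lborel (\<lambda>x. u x * complex_of_real (d\<phi> x))
    = - integral\<^sup>L lborel (\<lambda>x. du x * complex_of_real (\<phi> x))"
proof -
  have "d\<phi> x = 0" if "x \<notin> K" for x
    using line_derivative_eq_0_outside[OF compact_imp_closed[OF \<phi>(3)] \<phi>(4) that] \<phi>_deriv[of x 0]
    by (simp add: has_real_derivative_iff_has_vector_derivative)
  then have int: "integrable lborel (\<lambda>x. u x * d\<phi> x)" "integrable lborel (\<lambda>x. du x * \<phi> x)"
    using u \<phi> by (auto intro!: integrable_continuous_compact_support[OF _ \<phi>(3)] continuous_intros)
  have "((\<lambda>s. u (x + s *\<^sub>R e) * \<phi> (x + s *\<^sub>R e)) has_vector_derivative
      du (x + s *\<^sub>R e) * \<phi> (x + s *\<^sub>R e) + u (x + s *\<^sub>R e) * d\<phi> (x + s *\<^sub>R e)) (at s)" for x s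
    using has_vector_derivative_mult[OF u_deriv has_vector_derivative_of_real[OF \<phi>_deriv]]
    by (simp add: algebra_simps)
  then have "integral\<^sup>L lborel (\<lambda>x. du x * \<phi> x + u x * d\<phi> x) = 0"
    using u \<phi> by (intro integral_line_derivative_eq_0[of "\<lambda>x. u x * \<phi> x" _ K e])
      (auto intro!: continuous_intros)
  with int show ?thesis
    by (simp add: add_eq_0_iff)
qed

section \<open>Test functions\<close>

lemma smooth3_differentiable: "smooth3 \<phi> \<Longrightarrow> \<phi> differentiable (at x)"
  by (erule smooth3.cases) simp

lemma smooth3_partial_derivative: "smooth3 \<phi> \<Longrightarrow> smooth3 (\<lambda>x. frechet_derivative \<phi> (at x) (axis i 1))"
  by (erule smooth3.cases) simp

lemma smooth3_continuous: "smooth3 \<phi> \<Longrightarrow> continuous_on UNIV \<phi>"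
  by (auto dest: smooth3_differentiable intro!: continuous_at_imp_continuous_on differentiable_imp_continuous_within)

lemma has_real_derivative_along_line:
  fixes \<phi> :: "'a::real_normed_vector \<Rightarrow> real"
  assumes "\<phi> differentiable (at (x + s *\<^sub>R e))"
  shows "((\<lambda>s. \<phi> (x + s *\<^sub>R e)) has_real_derivative frechet_derivative \<phi> (at (x + s *\<^sub>R e)) e) (at s)"
proof -
  let ?D = "frechet_derivative \<phi> (at (x + s *\<^sub>R e))"
  have D: "(\<phi> has_derivative ?D) (at (x + s *\<^sub>R e))"
    using assms by (simp add: frechet_derivative_works)
  have "((\<lambda>s. \<phi> (x + s *\<^sub>R e)) has_derivative (\<lambda>h. ?D (h *\<^sub>R e))) (at s)"
    by (rule has_derivative_compose[of "\<lambda>s. x + s *\<^sub>R e", OF _ D]) (auto intro!: derivative_eq_intros)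
  moreover have "h * ?D e = ?D (h *\<^sub>R e)" for h
    using linear_scale[OF has_derivative_linear[OF D]] by simp
  ultimately show ?thesis
    by (rule has_derivative_imp_has_field_derivative)
qed

lemma test_fun3_continuous: "test_fun3 \<phi> \<Longrightarrow> continuous_on UNIV \<phi>"
  by (simp add: test_fun3_def smooth3_continuous)

lemma eq_0_outside_closure_support: "x \<notin> closure {x. \<phi> x \<noteq> 0} \<Longrightarrow> \<phi> x = 0"
  using closure_subset[of "{x. \<phi> x \<noteq> 0}"] by auto

lemma test_fun3_has_derivative_along_axis:
  assumes "test_fun3 \<phi>"
  shows "((\<lambda>s. \<phi> (x + s *\<^sub>R axis j 1)) has_real_derivative
      frechet_derivative \<phi> (at (x + s *\<^sub>R axis j 1)) (axis j 1)) (at s)"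
  using assms by (simp add: test_fun3_def smooth3_differentiable has_real_derivative_along_line)

lemma test_fun3_partial_derivative:
  assumes "test_fun3 \<phi>"
  shows "test_fun3 (\<lambda>x. frechet_derivative \<phi> (at x) (axis j 1))"
proof -
  let ?K = "closure {x. \<phi> x \<noteq> 0}"
  have "frechet_derivative \<phi> (at x) (axis j 1) = 0" if "x \<notin> ?K" for x
    using line_derivative_eq_0_outside[OF closed_closure eq_0_outside_closure_support that]
      test_fun3_has_derivative_along_axis[OF assms, of x j 0]
    by (simp add: has_real_derivative_iff_has_vector_derivative)
  then have "closure {x. frechet_derivative \<phi> (at x) (axis j 1) \<noteq> 0} \<subseteq> ?K"
    by (intro closure_minimal) auto
  then have "closure {x. frechet_derivative \<phi> (at x) (axis j 1) \<noteq> 0}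
      = ?K \<inter> closure {x. frechet_derivative \<phi> (at x) (axis j 1) \<noteq> 0}"
    by (rule Int_absorb1[symmetric])
  moreover have "compact ?K"
    using assms by (simp add: test_fun3_def)
  ultimately have "compact (closure {x. frechet_derivative \<phi> (at x) (axis j 1) \<noteq> 0})"
    by (metis compact_Int_closed closed_closure)
  then show ?thesis
    using assms by (simp add: test_fun3_def smooth3_partial_derivative)
qed

lemma test_fun3_integrable:
  assumes "test_fun3 \<phi>"
  shows "integrable lborel (\<lambda>x. complex_of_real (\<phi> x))"
proof (rule integrable_continuous_compact_support)
  show "continuous_on UNIV (\<lambda>x. complex_of_real (\<phi> x))"
    using test_fun3_continuous[OF assms] by (rule continuous_on_of_real)
  show "compact (closure {x. \<phi> x \<noteq> 0})"
    using assms by (simp add: test_fun3_def)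
qed (auto dest: eq_0_outside_closure_support)

lemma test_fun3_square_integrable:
  assumes "test_fun3 \<phi>"
  shows "(\<lambda>x. complex_of_real (\<phi> x)) \<in> Lp3 2"
proof -
  have "integrable lborel (\<lambda>x. (\<phi> x)\<^sup>2)"
  proof (rule integrable_continuous_compact_support)
    show "continuous_on UNIV (\<lambda>x. (\<phi> x)\<^sup>2)"
      using test_fun3_continuous[OF assms] by (rule continuous_on_power)
    show "compact (closure {x. \<phi> x \<noteq> 0})"
      using assms by (simp add: test_fun3_def)
  qed (auto dest: eq_0_outside_closure_support)
  moreover have "(\<lambda>x. complex_of_real (\<phi> x)) \<in> borel_measurable lborel"
    using test_fun3_integrable[OF assms] by (rule borel_measurable_integrable)
  ultimately show ?thesis
    by (simp add: Lp3_def)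
qed

section \<open>A square integrable weight on \<open>\<real>\<^sup>3\<close>\<close>

lemma nn_integral_powr_two_thirds_four_thirds_finite:
  "(\<integral>\<^sup>+t. ennreal (indicator {0..1} t * t powr (-2/3) + indicator {1..} t * t powr (-4/3)) \<partial>lborel) < \<infinity>"
proof -
  have "((\<lambda>t. t powr (-2/3)) has_integral (1 powr (-2/3+1) / (-2/3+1))) {0..1::real}"
    by (rule has_integral_powr_from_0) auto
  then have near_0: "(\<integral>\<^sup>+t. ennreal (indicator {0..1} t * t powr (-2/3)) \<partial>lborel) < \<infinity>"
    by (subst nn_integral_has_integral_lebesgue) auto
  have "((\<lambda>t. t powr (-4/3)) has_integral (-(1 powr (-4/3+1)) / (-4/3+1))) {1::real..}"
    by (rule has_integral_powr_to_inf) auto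
  then have near_infinity: "(\<integral>\<^sup>+t. ennreal (indicator {1..} t * t powr (-4/3)) \<partial>lborel) < \<infinity>"
    by (subst nn_integral_has_integral_lebesgue) auto
  have "(\<integral>\<^sup>+t. ennreal (indicator {0..1} t * t powr (-2/3) + indicator {1..} t * t powr (-4/3)) \<partial>lborel)
      = (\<integral>\<^sup>+t. ennreal (indicator {0..1} t * t powr (-2/3)) \<partial>lborel)
        + (\<integral>\<^sup>+t. ennreal (indicator {1..} t * t powr (-4/3)) \<partial>lborel)"
    by (subst nn_integral_add[symmetric]) (auto intro!: nn_integral_cong simp: ennreal_plus)
  with near_0 near_infinity show ?thesis
    by (simp add: ennreal_add_eq_top less_top)
qed

lemma nn_integral_abs_mult_one_plus_abs_powr_finite:
  "(\<integral>\<^sup>+t. ennreal ((\<bar>t\<bar> * (1 + \<bar>t\<bar>)) powr (-2/3)) \<partial>lborel) < \<infinity>"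
proof -
  define b :: "real \<Rightarrow> real" where
    "b t = indicator {0..1} t * t powr (-2/3) + indicator {1..} t * t powr (-4/3)" for t
  have b_pos: "(t * (1 + t)) powr (-2/3) \<le> b t" if "t > 0" for t
  proof (cases "t \<le> 1")
    case True
    then have "(t * (1 + t)) powr (-2/3) \<le> t powr (-2/3)"
      using that by (intro powr_mono2') (auto simp: algebra_simps)
    moreover have "b t = t powr (-2/3) + indicator {1..} t * t powr (-4/3)"
      using True that by (simp add: b_def)
    ultimately show ?thesis
      by (smt (verit) indicator_pos_le mult_nonneg_nonneg powr_ge_zero)
  next
    case False
    then have "(t * (1 + t)) powr (-2/3) \<le> (t * t) powr (-2/3)"
      by (intro powr_mono2') auto
    also have "\<dots> = t powr (-4/3)"
      using False by (simp add: powr_mult powr_add[symmetric])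
    finally show ?thesis
      using False by (simp add: b_def)
  qed
  have "(\<bar>t\<bar> * (1 + \<bar>t\<bar>)) powr (-2/3) \<le> b t + b (-t)" for t
    using b_pos[of t] b_pos[of "-t"] by (cases t "0::real" rule: linorder_cases) (auto simp: b_def)
  then have "(\<integral>\<^sup>+t. ennreal ((\<bar>t\<bar> * (1 + \<bar>t\<bar>)) powr (-2/3)) \<partial>lborel)
      \<le> (\<integral>\<^sup>+t. ennreal (b t) \<partial>lborel) + (\<integral>\<^sup>+t. ennreal (b (-t)) \<partial>lborel)"
    by (subst nn_integral_add[symmetric])
      (auto intro!: nn_integral_mono simp: b_def ennreal_plus[symmetric] simp del: ennreal_plus)
  also have "(\<integral>\<^sup>+t. ennreal (b (-t)) \<partial>lborel) = (\<integral>\<^sup>+t. ennreal (b t) \<partial>lborel)"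
    by (subst lborel_distr_uminus[symmetric]) (simp add: nn_integral_distr b_def)
  also have "(\<integral>\<^sup>+t. ennreal (b t) \<partial>lborel) + (\<integral>\<^sup>+t. ennreal (b t) \<partial>lborel) < \<infinity>"
    using nn_integral_powr_two_thirds_four_thirds_finite
    by (simp add: b_def ennreal_add_eq_top less_top)
  finally show ?thesis .
qed

lemma square_integrable_inverse_norm_mult_one_plus_norm:
  "integrable lborel (\<lambda>x::real^3. (1 / (norm x * (1 + norm x)))\<^sup>2)"
proof (rule integrableI_bounded)
  \<comment> \<open>\<open>Q\<close> is infinite where \<open>0 powr (-2/3) = 0\<close> would spoil the product bound; this is a null set.\<close>
  define Q :: "real \<Rightarrow> ennreal" where
    "Q t = (if t = 0 then \<infinity> else ennreal ((\<bar>t\<bar> * (1 + \<bar>t\<bar>)) powr (-2/3)))" for t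
  have Q_pos: "Q t \<noteq> 0" for t
    by (auto simp: Q_def ennreal_eq_0_iff not_le add_pos_pos)
  have "(\<integral>\<^sup>+t. Q t \<partial>lborel) = (\<integral>\<^sup>+t. ennreal ((\<bar>t\<bar> * (1 + \<bar>t\<bar>)) powr (-2/3)) \<partial>lborel)"
    using AE_lborel_singleton[of 0] by (intro nn_integral_cong_AE) (auto simp: Q_def elim!: eventually_mono)
  with nn_integral_abs_mult_one_plus_abs_powr_finite have Q_finite: "(\<integral>\<^sup>+t. Q t \<partial>lborel) < \<infinity>"
    by simp
  have bound: "ennreal ((1 / (norm x * (1 + norm x)))\<^sup>2) \<le> (\<Prod>b\<in>Basis. Q (x \<bullet> b))" for x :: "real^3"
  proof (cases "\<exists>b\<in>Basis. x \<bullet> b = 0")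
    case True
    then have "(\<Prod>b\<in>Basis. Q (x \<bullet> b)) = \<infinity>"
      using Q_pos by (auto simp: ennreal_prod_eq_top Q_def)
    then show ?thesis by simp
  next
    case False
    then have "x \<noteq> 0"
      using nonempty_Basis by fastforce
    define R where "R = norm x * (1 + norm x)"
    have "R > 0"
      using \<open>x \<noteq> 0\<close> by (simp add: R_def add_pos_pos)
    have "R powr (-2/3) \<le> (\<bar>x \<bullet> b\<bar> * (1 + \<bar>x \<bullet> b\<bar>)) powr (-2/3)" if "b \<in> Basis" for b
      using False that Basis_le_norm[OF that, of x]
      by (intro powr_mono2') (auto simp: R_def add_pos_pos intro!: mult_mono)
    then have "(\<Prod>b\<in>(Basis::(real^3) set). R powr (-2/3))
        \<le> (\<Prod>b\<in>Basis. (\<bar>x \<bullet> b\<bar> * (1 + \<bar>x \<bullet> b\<bar>)) powr (-2/3))"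
      by (intro prod_mono) auto
    moreover have "(\<Prod>b\<in>(Basis::(real^3) set). R powr (-2/3)) = (1 / R)\<^sup>2"
    proof -
      have "(\<Prod>b\<in>(Basis::(real^3) set). R powr (-2/3)) = (R powr (-2/3)) ^ 3"
        by simp
      also have "\<dots> = R powr (-2)"
        using \<open>R > 0\<close> by (simp add: powr_power)
      finally show ?thesis
        using \<open>R > 0\<close> by (simp add: powr_minus_divide power_one_over)
    qed
    moreover have "(\<Prod>b\<in>Basis. Q (x \<bullet> b))
        = ennreal (\<Prod>b\<in>Basis. (\<bar>x \<bullet> b\<bar> * (1 + \<bar>x \<bullet> b\<bar>)) powr (-2/3))"
      using False by (simp add: Q_def prod_ennreal)
    ultimately show ?thesis
      by (simp add: R_def ennreal_leI)
  qed
  have "(\<integral>\<^sup>+x. ennreal (norm ((1 / (norm (x::real^3) * (1 + norm x)))\<^sup>2)) \<partial>lborel)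
      \<le> (\<integral>\<^sup>+x. (\<Prod>b\<in>Basis. Q ((x::real^3) \<bullet> b)) \<partial>lborel)"
    using bound by (intro nn_integral_mono) simp
  also have "\<dots> = (\<Prod>b\<in>(Basis::(real^3) set). \<integral>\<^sup>+t. Q t \<partial>lborel)"
    by (rule nn_integral_lborel_prod) (auto simp: Q_def)
  also have "\<dots> < \<infinity>"
    using Q_finite by (simp add: power_less_top_ennreal)
  finally show "(\<integral>\<^sup>+x. ennreal (norm ((1 / (norm (x::real^3) * (1 + norm x)))\<^sup>2)) \<partial>lborel) < \<infinity>" .
qed (measurable)

section \<open>Radial functions with a decaying profile\<close>

definition reg_norm :: "real \<Rightarrow> 'a::real_inner \<Rightarrow> real" where
  "reg_norm \<epsilon> x = sqrt ((norm x)\<^sup>2 + \<epsilon>\<^sup>2)"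

lemma reg_norm_0 [simp]: "reg_norm 0 x = norm x"
  by (simp add: reg_norm_def)

lemma reg_norm_nonneg: "0 \<le> reg_norm \<epsilon> x"
  by (simp add: reg_norm_def)

lemma norm_le_reg_norm: "norm x \<le> reg_norm \<epsilon> x"
  unfolding reg_norm_def by (rule real_le_rsqrt) simp

lemma reg_norm_pos: "\<epsilon> \<noteq> 0 \<Longrightarrow> 0 < reg_norm \<epsilon> x"
  by (simp add: reg_norm_def add_nonneg_pos)

lemma continuous_on_reg_norm: "continuous_on UNIV (reg_norm \<epsilon>)"
  unfolding reg_norm_def by (intro continuous_intros)

lemma tendsto_reg_norm: "\<epsilon> \<longlonglongrightarrow> 0 \<Longrightarrow> (\<lambda>n. reg_norm (\<epsilon> n) x) \<longlonglongrightarrow> norm x"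
  unfolding reg_norm_def by (auto intro!: tendsto_eq_intros)

lemma reg_norm_has_derivative_along_line:
  assumes "\<epsilon> \<noteq> 0"
  shows "((\<lambda>s. reg_norm \<epsilon> (x + s *\<^sub>R e)) has_real_derivative
      ((x + s *\<^sub>R e) \<bullet> e) / reg_norm \<epsilon> (x + s *\<^sub>R e)) (at s)"
proof -
  let ?v = "(x + s *\<^sub>R e) \<bullet> (x + s *\<^sub>R e) + \<epsilon>\<^sup>2"
  have "0 < ?v"
    using assms by (simp add: add_nonneg_pos)
  moreover have "((\<lambda>s. (x + s *\<^sub>R e) \<bullet> (x + s *\<^sub>R e) + \<epsilon>\<^sup>2)
      has_real_derivative 2 * ((x + s *\<^sub>R e) \<bullet> e)) (at s)"
    by (auto intro!: derivative_eq_intros simp: inner_commute algebra_simps)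
  ultimately have "((\<lambda>s. sqrt ((x + s *\<^sub>R e) \<bullet> (x + s *\<^sub>R e) + \<epsilon>\<^sup>2)) has_real_derivative
      inverse (sqrt ?v) / 2 * (2 * ((x + s *\<^sub>R e) \<bullet> e))) (at s)"
    by (rule DERIV_chain2[OF DERIV_real_sqrt])
  moreover have "inverse (sqrt ?v) / 2 * (2 * ((x + s *\<^sub>R e) \<bullet> e)) = ((x + s *\<^sub>R e) \<bullet> e) / sqrt ?v"
    by (simp add: field_simps)
  ultimately show ?thesis
    by (simp add: reg_norm_def power2_norm_eq_inner)
qed

locale radial_profile =
  fixes H H' :: "real \<Rightarrow> complex" and M A :: real
  assumes continuous_on_H: "continuous_on {0..} H"
    and H_has_derivative: "\<And>\<rho>. 0 < \<rho> \<Longrightarrow> (H has_vector_derivative H' \<rho>) (at \<rho>)"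
    and continuous_on_H': "continuous_on {0<..} H'"
    and norm_H_le: "\<And>\<rho>. 0 \<le> \<rho> \<Longrightarrow> norm (H \<rho>) \<le> M / (1 + \<rho>)"
    and norm_H'_le: "\<And>\<rho>. 0 < \<rho> \<Longrightarrow> norm (H' \<rho>) \<le> A / (\<rho> * (1 + \<rho>))"
begin

text \<open>For \<open>\<epsilon> \<noteq> 0\<close> these are the smooth regularisations \<open>x \<mapsto> H (sqrt ((norm x)\<^sup>2 + \<epsilon>\<^sup>2))\<close> and
  their derivatives in direction \<open>e\<close>; \<open>\<epsilon> = 0\<close> gives \<open>x \<mapsto> H (norm x)\<close> and its derivative
  away from the origin, where \<open>radial_grad 0 e 0 = 0\<close> because \<open>0 / 0 = 0\<close>.\<close>

definition radial :: "real \<Rightarrow> 'a::real_inner \<Rightarrow> complex" where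
  "radial \<epsilon> x = H (reg_norm \<epsilon> x)"

definition radial_grad :: "real \<Rightarrow> 'a::real_inner \<Rightarrow> 'a \<Rightarrow> complex" where
  "radial_grad \<epsilon> e x = (x \<bullet> e / reg_norm \<epsilon> x) *\<^sub>R H' (reg_norm \<epsilon> x)"

lemma M_nonneg: "0 \<le> M"
  using order_trans[OF norm_ge_zero norm_H_le[of 0]] by simp

lemma A_nonneg: "0 \<le> A"
  using order_trans[OF norm_ge_zero norm_H'_le[of 1]] by simp

lemma continuous_on_radial: "continuous_on UNIV (radial \<epsilon>)"
  unfolding radial_def[abs_def]
  by (rule continuous_on_compose2[OF continuous_on_H continuous_on_reg_norm]) (auto simp: reg_norm_nonneg)

lemma continuous_on_radial_grad:
  assumes "\<epsilon> \<noteq> 0"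
  shows "continuous_on UNIV (radial_grad \<epsilon> e)"
proof -
  have "continuous_on UNIV (\<lambda>x. H' (reg_norm \<epsilon> x))"
    using assms by (intro continuous_on_compose2[OF continuous_on_H' continuous_on_reg_norm]) (auto simp: reg_norm_pos)
  then show ?thesis
    unfolding radial_grad_def[abs_def] using assms
    by (intro continuous_intros continuous_on_reg_norm) (auto simp: reg_norm_pos less_imp_neq[symmetric])
qed

lemma radial_has_derivative_along_line:
  assumes "\<epsilon> \<noteq> 0"
  shows "((\<lambda>s. radial \<epsilon> (x + s *\<^sub>R e)) has_vector_derivative radial_grad \<epsilon> e (x + s *\<^sub>R e)) (at s)"
  using vector_diff_chain_at[OF reg_norm_has_derivative_along_line[OF assms, unfolded has_real_derivative_iff_has_vector_derivative]
      H_has_derivative[OF reg_norm_pos[OF assms]]]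
  by (simp add: radial_def[abs_def] radial_grad_def o_def)

lemma norm_radial_le: "norm (radial \<epsilon> x) \<le> M"
proof -
  have "norm (radial \<epsilon> x) \<le> M / (1 + reg_norm \<epsilon> x)"
    unfolding radial_def by (rule norm_H_le[OF reg_norm_nonneg])
  also have "\<dots> \<le> M"
    using M_nonneg reg_norm_nonneg[of \<epsilon> x] by (simp add: divide_le_eq algebra_simps)
  finally show ?thesis .
qed

lemma norm_radial_grad_le:
  assumes "norm e \<le> 1"
  shows "norm (radial_grad \<epsilon> e x) \<le> A / (norm x * (1 + norm x))"
proof (cases "x = 0")
  case True
  then show ?thesis by (simp add: radial_grad_def)
next
  case False
  define \<rho> where "\<rho> = reg_norm \<epsilon> x"
  have "0 < norm x" "norm x \<le> \<rho>"
    using False norm_le_reg_norm by (auto simp: \<rho>_def)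
  then have "0 < \<rho>"
    by linarith
  have "\<bar>x \<bullet> e\<bar> \<le> \<rho>"
    using Cauchy_Schwarz_ineq2[of x e] mult_left_mono[OF assms, of "norm x"] \<open>norm x \<le> \<rho>\<close> by simp
  then have "norm (radial_grad \<epsilon> e x) \<le> 1 * (A / (\<rho> * (1 + \<rho>)))"
    unfolding radial_grad_def \<rho>_def[symmetric] norm_scaleR using \<open>0 < \<rho>\<close> norm_H'_le[OF \<open>0 < \<rho>\<close>]
    by (intro mult_mono) (auto simp: divide_le_eq)
  also have "\<dots> \<le> A / (norm x * (1 + norm x))"
    unfolding mult_1_left using \<open>0 < norm x\<close> \<open>norm x \<le> \<rho>\<close> \<open>0 < \<rho>\<close> A_nonneg
    by (intro divide_left_mono mult_mono mult_pos_pos) (auto simp: add_pos_nonneg)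
  finally show ?thesis .
qed

lemma tendsto_radial: "\<epsilon> \<longlonglongrightarrow> 0 \<Longrightarrow> (\<lambda>n. radial (\<epsilon> n) x) \<longlonglongrightarrow> radial 0 x"
  unfolding radial_def reg_norm_0
  by (rule continuous_on_tendsto_compose[OF continuous_on_H tendsto_reg_norm]) (auto simp: reg_norm_nonneg)

lemma tendsto_radial_grad:
  assumes "\<epsilon> \<longlonglongrightarrow> 0"
  shows "(\<lambda>n. radial_grad (\<epsilon> n) e x) \<longlonglongrightarrow> radial_grad 0 e x"
proof (cases "x = 0")
  case True
  then show ?thesis by (simp add: radial_grad_def)
next
  case False
  have "(\<lambda>n. H' (reg_norm (\<epsilon> n) x)) \<longlonglongrightarrow> H' (norm x)"
    using False
    by (intro continuous_on_tendsto_compose[OF continuous_on_H' tendsto_reg_norm[OF assms]])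
      (auto intro!: always_eventually order.strict_trans2[OF _ norm_le_reg_norm])
  moreover have "(\<lambda>n. x \<bullet> e / reg_norm (\<epsilon> n) x) \<longlonglongrightarrow> x \<bullet> e / norm x"
    using False by (intro tendsto_intros tendsto_reg_norm[OF assms]) auto
  ultimately show ?thesis
    unfolding radial_grad_def by (simp add: tendsto_scaleR)
qed

lemma radial_measurable: "(radial \<epsilon> :: 'a::euclidean_space \<Rightarrow> complex) \<in> borel_measurable lborel"
  unfolding measurable_lborel2 by (rule borel_measurable_continuous_onI[OF continuous_on_radial])

lemma radial_grad_measurable: "(radial_grad \<epsilon> e :: 'a::euclidean_space \<Rightarrow> complex) \<in> borel_measurable lborel"
proof (cases "\<epsilon> = 0")
  case True
  show ?thesis
  proof (rule borel_measurable_LIMSEQ_metric)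
    show "radial_grad (inverse (real (Suc n))) e \<in> borel_measurable lborel" for n
      unfolding measurable_lborel2 by (intro borel_measurable_continuous_onI continuous_on_radial_grad) simp
    show "(\<lambda>n. radial_grad (inverse (real (Suc n))) e x) \<longlonglongrightarrow> radial_grad \<epsilon> e x" for x
      using True tendsto_radial_grad[OF LIMSEQ_inverse_real_of_nat] by simp
  qed
next
  case False
  then show ?thesis
    unfolding measurable_lborel2 by (intro borel_measurable_continuous_onI continuous_on_radial_grad)
qed

lemma radial_Lp4: "(radial 0 :: real^3 \<Rightarrow> complex) \<in> Lp3 4"
proof -
  have bound: "norm (radial 0 x) ^ 4 \<le> M ^ 4 * (1 / (norm x * (1 + norm x)))\<^sup>2" if "x \<noteq> 0" for x :: "real^3"
  proof -
    let ?r = "norm x"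
    have "norm (radial 0 x) ^ 4 \<le> (M / (1 + ?r)) ^ 4"
      unfolding radial_def reg_norm_0 by (intro power_mono norm_H_le) auto
    also have "\<dots> = M ^ 4 * (1 / ((1 + ?r) * (1 + ?r)))\<^sup>2"
      by (simp add: power_divide power2_eq_square eval_nat_numeral)
    also have "\<dots> \<le> M ^ 4 * (1 / (?r * (1 + ?r)))\<^sup>2"
      using that by (intro mult_left_mono power_mono divide_left_mono mult_right_mono mult_pos_pos)
        (auto simp: add_pos_nonneg)
    finally show ?thesis .
  qed
  \<comment> \<open>At the origin the bound fails, its right-hand side being 0 since \<open>1 / 0 = 0\<close>.\<close>
  have AE: "AE x in lborel. norm (norm (radial 0 x) ^ 4) \<le> norm (M ^ 4 * (1 / (norm (x::real^3) * (1 + norm x)))\<^sup>2)"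
    using AE_lborel_singleton[of 0] by (rule eventually_mono) (simp add: bound)
  have int: "integrable lborel (\<lambda>x::real^3. M ^ 4 * (1 / (norm x * (1 + norm x)))\<^sup>2)"
    by (intro integrable_mult_right square_integrable_inverse_norm_mult_one_plus_norm)
  have meas: "(radial 0 :: real^3 \<Rightarrow> complex) \<in> borel_measurable lborel"
    by (rule radial_measurable)
  then have "integrable lborel (\<lambda>x::real^3. norm (radial 0 x) ^ 4)"
    by (intro Bochner_Integration.integrable_bound[OF int _ AE] borel_measurable_power
        measurable_compose[OF _ borel_measurable_norm])
  with meas show ?thesis
    by (simp add: Lp3_def)
qed

lemma radial_grad_Lp2:
  assumes "norm e \<le> 1"
  shows "(radial_grad 0 e :: real^3 \<Rightarrow> complex) \<in> Lp3 2"
proof -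
  have bound: "norm (norm (radial_grad 0 e x) ^ 2) \<le> norm (A ^ 2 * (1 / (norm x * (1 + norm x)))\<^sup>2)" for x :: "real^3"
    using norm_radial_grad_le[OF assms, of 0 x] by (simp add: power_mult_distrib[symmetric] power_mono)
  have int: "integrable lborel (\<lambda>x::real^3. A ^ 2 * (1 / (norm x * (1 + norm x)))\<^sup>2)"
    by (intro integrable_mult_right square_integrable_inverse_norm_mult_one_plus_norm)
  have meas: "(radial_grad 0 e :: real^3 \<Rightarrow> complex) \<in> borel_measurable lborel"
    by (rule radial_grad_measurable)
  then have "integrable lborel (\<lambda>x::real^3. norm (radial_grad 0 e x) ^ 2)"
    by (intro Bochner_Integration.integrable_bound[OF int _ AE_I2[OF bound]] borel_measurable_power
        measurable_compose[OF _ borel_measurable_norm])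
  with meas show ?thesis
    by (simp add: Lp3_def)
qed

lemma tendsto_integral_radial_mult:
  fixes g :: "real^3 \<Rightarrow> complex"
  assumes "\<epsilon> \<longlonglongrightarrow> 0" and "integrable lborel g"
  shows "(\<lambda>n. integral\<^sup>L lborel (\<lambda>x. radial (\<epsilon> n) x * g x))
    \<longlonglongrightarrow> integral\<^sup>L lborel (\<lambda>x. radial 0 x * g x)"
proof -
  have meas: "(\<lambda>x. radial \<epsilon>' x * g x) \<in> borel_measurable lborel" for \<epsilon>'
    using radial_measurable borel_measurable_integrable[OF assms(2)] by (rule borel_measurable_times)
  show ?thesis
  proof (rule integral_dominated_convergence[where w="\<lambda>x. M * norm (g x)"])
    show "(\<lambda>x. radial 0 x * g x) \<in> borel_measurable lborel"
      "(\<lambda>x. radial (\<epsilon> n) x * g x) \<in> borel_measurable lborel" for n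
      by (rule meas)+
    show "integrable lborel (\<lambda>x. M * norm (g x))"
      using assms(2) by (intro integrable_mult_right integrable_norm)
    show "AE x in lborel. (\<lambda>n. radial (\<epsilon> n) x * g x) \<longlonglongrightarrow> radial 0 x * g x"
      by (intro AE_I2 tendsto_mult_right tendsto_radial[OF assms(1)])
    show "AE x in lborel. norm (radial (\<epsilon> n) x * g x) \<le> M * norm (g x)" for n
      unfolding norm_mult by (intro AE_I2 mult_right_mono norm_radial_le norm_ge_zero)
  qed
qed

lemma norm_radial_grad_mult_le:
  assumes "norm e \<le> 1"
  shows "norm (radial_grad \<epsilon> e x * z) \<le> A * ((1 / (norm x * (1 + norm x)))\<^sup>2 + (norm z)\<^sup>2)"
proof -
  let ?D = "1 / (norm x * (1 + norm x))"
  have "norm (radial_grad \<epsilon> e x * z) \<le> A * ?D * norm z"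
    unfolding norm_mult using norm_radial_grad_le[OF assms, of \<epsilon> x] by (intro mult_right_mono) simp_all
  also have "\<dots> \<le> A * (?D\<^sup>2 + (norm z)\<^sup>2)"
  proof -
    have "0 \<le> ?D * norm z"
      by simp
    then have "?D * norm z \<le> ?D\<^sup>2 + (norm z)\<^sup>2"
      using sum_squares_bound[of ?D "norm z"] by linarith
    from mult_left_mono[OF this A_nonneg] show ?thesis
      by (simp only: mult.assoc)
  qed
  finally show ?thesis .
qed

lemma tendsto_integral_radial_grad_mult:
  fixes g :: "real^3 \<Rightarrow> complex"
  assumes "\<epsilon> \<longlonglongrightarrow> 0" and "norm e \<le> 1" and "g \<in> Lp3 2"
  shows "(\<lambda>n. integral\<^sup>L lborel (\<lambda>x. radial_grad (\<epsilon> n) e x * g x))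
    \<longlonglongrightarrow> integral\<^sup>L lborel (\<lambda>x. radial_grad 0 e x * g x)"
proof -
  have g: "g \<in> borel_measurable lborel" "integrable lborel (\<lambda>x. (norm (g x))\<^sup>2)"
    using assms(3) by (simp_all add: Lp3_def)
  have meas: "(\<lambda>x. radial_grad \<epsilon>' e x * g x) \<in> borel_measurable lborel" for \<epsilon>'
    using radial_grad_measurable g(1) by (rule borel_measurable_times)
  show ?thesis
  proof (rule integral_dominated_convergence[where w="\<lambda>x. A * ((1 / (norm x * (1 + norm x)))\<^sup>2 + (norm (g x))\<^sup>2)"])
    show "(\<lambda>x. radial_grad 0 e x * g x) \<in> borel_measurable lborel"
      "(\<lambda>x. radial_grad (\<epsilon> n) e x * g x) \<in> borel_measurable lborel" for n
      by (rule meas)+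
    show "integrable lborel (\<lambda>x. A * ((1 / (norm x * (1 + norm x)))\<^sup>2 + (norm (g x))\<^sup>2))"
      using g(2)
      by (intro integrable_mult_right Bochner_Integration.integrable_add square_integrable_inverse_norm_mult_one_plus_norm)
    show "AE x in lborel. (\<lambda>n. radial_grad (\<epsilon> n) e x * g x) \<longlonglongrightarrow> radial_grad 0 e x * g x"
      by (intro AE_I2 tendsto_mult_right tendsto_radial_grad[OF assms(1)])
    show "AE x in lborel. norm (radial_grad (\<epsilon> n) e x * g x)
        \<le> A * ((1 / (norm x * (1 + norm x)))\<^sup>2 + (norm (g x))\<^sup>2)" for n
      using assms(2) by (intro AE_I2 norm_radial_grad_mult_le)
  qed
qed

lemma radial_weak_derivative:
  assumes "test_fun3 \<phi>"
  shows "integral\<^sup>L lborel (\<lambda>x::real^3. radial 0 x * complex_of_real (frechet_derivative \<phi> (at x) (axis j 1)))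
    = - integral\<^sup>L lborel (\<lambda>x. radial_grad 0 (axis j 1) x * complex_of_real (\<phi> x))"
proof -
  define \<epsilon> :: "nat \<Rightarrow> real" where "\<epsilon> n = inverse (real (Suc n))" for n
  have "\<epsilon> \<longlonglongrightarrow> 0"
    unfolding \<epsilon>_def by (rule LIMSEQ_inverse_real_of_nat)
  let ?d\<phi> = "\<lambda>x. frechet_derivative \<phi> (at x) (axis j 1)"
  have by_parts: "integral\<^sup>L lborel (\<lambda>x::real^3. radial (\<epsilon> n) x * complex_of_real (?d\<phi> x))
      = - integral\<^sup>L lborel (\<lambda>x. radial_grad (\<epsilon> n) (axis j 1) x * complex_of_real (\<phi> x))" for n
  proof (rule integration_by_parts_along_line)
    have "\<epsilon> n \<noteq> 0"
      by (simp add: \<epsilon>_def)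
    then show "continuous_on UNIV (radial_grad (\<epsilon> n) (axis j 1))"
      "((\<lambda>s. radial (\<epsilon> n) (x + s *\<^sub>R axis j 1)) has_vector_derivative
          radial_grad (\<epsilon> n) (axis j 1) (x + s *\<^sub>R axis j 1)) (at s)" for x s
      by (simp_all add: continuous_on_radial_grad radial_has_derivative_along_line)
    show "continuous_on UNIV \<phi>" "continuous_on UNIV ?d\<phi>"
      using assms test_fun3_partial_derivative by (blast intro: test_fun3_continuous)+
    show "compact (closure {x. \<phi> x \<noteq> 0})"
      using assms by (simp add: test_fun3_def)
  qed (auto simp: continuous_on_radial test_fun3_has_derivative_along_axis[OF assms] dest: eq_0_outside_closure_support)
  have "(\<lambda>n. integral\<^sup>L lborel (\<lambda>x. radial (\<epsilon> n) x * complex_of_real (?d\<phi> x)))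
      \<longlonglongrightarrow> integral\<^sup>L lborel (\<lambda>x. radial 0 x * complex_of_real (?d\<phi> x))"
    using \<open>\<epsilon> \<longlonglongrightarrow> 0\<close> test_fun3_integrable[OF test_fun3_partial_derivative[OF assms]]
    by (rule tendsto_integral_radial_mult)
  moreover have "(\<lambda>n. integral\<^sup>L lborel (\<lambda>x. radial (\<epsilon> n) x * complex_of_real (?d\<phi> x)))
      \<longlonglongrightarrow> - integral\<^sup>L lborel (\<lambda>x. radial_grad 0 (axis j 1) x * complex_of_real (\<phi> x))"
    unfolding by_parts
    by (intro tendsto_minus tendsto_integral_radial_grad_mult[OF \<open>\<epsilon> \<longlonglongrightarrow> 0\<close> _ test_fun3_square_integrable[OF assms]])
      simp
  ultimately show ?thesis
    by (rule LIMSEQ_unique)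
qed

lemma radial_Hdot1: "(radial 0 :: real^3 \<Rightarrow> complex) \<in> Hdot1_3"
  unfolding Hdot1_3_def
proof (intro CollectI conjI allI impI exI[where x="\<lambda>j. radial_grad 0 (axis j 1)"])
  show "radial 0 \<in> borel_measurable lborel"
    by (rule radial_measurable)
  show "set_integrable lborel K (radial 0)" if "compact K" for K
    unfolding set_integrable_def using that
    by (intro borel_integrable_compact continuous_on_subset[OF continuous_on_radial]) auto
  show "radial_grad 0 (axis j 1) \<in> Lp3 2" for j :: 3
    by (rule radial_grad_Lp2) simp
qed (rule radial_weak_derivative)

end

section \<open>The profile of \<open>h\<close>\<close>

lemma cpow_weight_has_derivative:
  assumes "-1 < \<rho>"
  shows "(cpow_weight \<alpha> has_vector_derivative - (1 + \<i> / \<alpha>) / complex_of_real (1 + \<rho>) * cpow_weight \<alpha> \<rho>) (at \<rho>)"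
proof -
  have "((\<lambda>r. - (1 + \<i> / \<alpha>) * complex_of_real (ln (1 + r))) has_vector_derivative
      - (1 + \<i> / \<alpha>) * complex_of_real (1 / (1 + \<rho>))) (at \<rho>)"
    using assms
    by (intro has_vector_derivative_mult_right has_vector_derivative_of_real) (auto intro!: derivative_eq_intros)
  from field_vector_diff_chain_at[OF this DERIV_exp]
  show ?thesis
    unfolding cpow_weight_def o_def by (simp add: field_simps)
qed

lemma norm_cpow_weight: "-1 < \<rho> \<Longrightarrow> norm (cpow_weight \<alpha> \<rho>) = 1 / (1 + \<rho>)"
  unfolding cpow_weight_def norm_exp_eq_Re by (simp add: exp_minus field_simps)

lemma continuous_on_cpow_weight: "continuous_on {0..} (cpow_weight \<alpha>)"
  unfolding cpow_weight_def by (auto intro!: continuous_intros)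

lemma cayley_mem_Icc: "0 \<le> \<rho> \<Longrightarrow> (\<rho> - 1) / (\<rho> + 1) \<in> {-1..(1::real)}"
  by (auto simp: field_simps)

lemma cayley_mem_Ioo: "0 < \<rho> \<Longrightarrow> (\<rho> - 1) / (\<rho> + 1) \<in> {-1<..<(1::real)}"
  by (auto simp: field_simps)

lemma cayley_derivative_eq:
  assumes "0 < (\<rho>::real)"
  shows "2 / (\<rho> + 1)\<^sup>2 = (1 - ((\<rho> - 1) / (\<rho> + 1))\<^sup>2) / (2 * \<rho>)"
proof -
  have nz: "(\<rho> + 1)\<^sup>2 \<noteq> 0"
    using assms by simp
  then have eq: "1 - ((\<rho> - 1) / (\<rho> + 1))\<^sup>2 = 4 * \<rho> / (\<rho> + 1)\<^sup>2"
    by (simp add: field_simps) (simp add: power2_eq_square algebra_simps)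
  show ?thesis
    unfolding eq using assms nz by (simp add: divide_simps)
qed

lemma cayley_has_derivative:
  "0 \<le> (\<rho>::real) \<Longrightarrow> ((\<lambda>r. (r - 1) / (r + 1)) has_real_derivative 2 / (\<rho> + 1)\<^sup>2) (at \<rho>)"
  by (auto intro!: derivative_eq_intros simp: field_simps power2_eq_square)

definition X_profile :: "real \<Rightarrow> (real \<Rightarrow> complex) \<Rightarrow> real \<Rightarrow> complex" where
  "X_profile \<alpha> f \<rho> = cpow_weight \<alpha> \<rho> * f ((\<rho> - 1) / (\<rho> + 1))"

definition X_profile_deriv :: "real \<Rightarrow> (real \<Rightarrow> complex) \<Rightarrow> real \<Rightarrow> complex" where
  "X_profile_deriv \<alpha> f \<rho> = - (1 + \<i> / \<alpha>) / complex_of_real (1 + \<rho>) * X_profile \<alpha> f \<rho>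
     + cpow_weight \<alpha> \<rho> * complex_of_real (2 / (\<rho> + 1)\<^sup>2) * vector_derivative f (at ((\<rho> - 1) / (\<rho> + 1)))"

lemma X_space_bounded:
  assumes "f \<in> X_space"
  obtains M where "0 \<le> M" "\<And>y. y \<in> {-1..1} \<Longrightarrow> norm (f y) \<le> M"
proof -
  have "continuous_on {-1..1} f"
    using assms by (simp add: X_space_def)
  then obtain M where "\<forall>y\<in>{-1..1}. norm (f y) \<le> M"
    using compact_imp_bounded[OF compact_continuous_image[OF _ compact_Icc]] by (meson bounded_iff image_eqI)
  moreover from this have "0 \<le> M"
    by (smt (verit) atLeastAtMost_iff norm_ge_zero)
  ultimately show ?thesis
    using that by blast
qed

lemma X_space_weighted_derivative_bounded:
  assumes "f \<in> X_space"
  obtains M where "0 \<le> M" "\<And>y. y \<in> {-1<..<1} \<Longrightarrow> (1 - y\<^sup>2) * norm (vector_derivative f (at y)) \<le> M"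
proof -
  obtain g where g: "continuous_on {-1..1} g"
    "\<And>y. y \<in> {-1<..<1} \<Longrightarrow> g y = complex_of_real (1 - y\<^sup>2) * vector_derivative f (at y)"
    using assms by (auto simp: X_space_def)
  then obtain M where M: "\<forall>y\<in>{-1..1}. norm (g y) \<le> M"
    using compact_imp_bounded[OF compact_continuous_image[OF _ compact_Icc]] by (meson bounded_iff image_eqI)
  have "(1 - y\<^sup>2) * norm (vector_derivative f (at y)) \<le> M" if "y \<in> {-1<..<1}" for y
  proof -
    have "\<bar>y\<bar> < 1"
      using that by auto
    then have "0 \<le> 1 - y\<^sup>2"
      by (simp add: abs_square_less_1 less_imp_le)
    then have "(1 - y\<^sup>2) * norm (vector_derivative f (at y)) = norm (g y)"
      using g(2)[OF that] by (simp only: norm_mult norm_of_real abs_of_nonneg)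
    also have "\<dots> \<le> M"
      using M that by auto
    finally show ?thesis .
  qed
  moreover from M have "0 \<le> M"
    by (smt (verit) atLeastAtMost_iff norm_ge_zero)
  ultimately show ?thesis
    using that by blast
qed

lemma norm_X_profile_le:
  assumes "\<And>y. y \<in> {-1..1} \<Longrightarrow> norm (f y) \<le> M" and "0 \<le> \<rho>"
  shows "norm (X_profile \<alpha> f \<rho>) \<le> M / (1 + \<rho>)"
proof -
  have "norm (X_profile \<alpha> f \<rho>) = norm (f ((\<rho> - 1) / (\<rho> + 1))) / (1 + \<rho>)"
    using assms(2) by (simp add: X_profile_def norm_mult norm_cpow_weight)
  also have "\<dots> \<le> M / (1 + \<rho>)"
    using assms cayley_mem_Icc by (intro divide_right_mono) auto
  finally show ?thesis .
qed

lemma norm_X_profile_deriv_le: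
  assumes f: "\<And>y. y \<in> {-1..1} \<Longrightarrow> norm (f y) \<le> M"
    and f': "\<And>y. y \<in> {-1<..<1} \<Longrightarrow> (1 - y\<^sup>2) * norm (vector_derivative f (at y)) \<le> M'"
    and "0 \<le> M" "0 \<le> M'" "0 < \<rho>"
  shows "norm (X_profile_deriv \<alpha> f \<rho>) \<le> (norm (1 + \<i> / \<alpha>) * M + M') / (\<rho> * (1 + \<rho>))"
proof -
  define y where "y = (\<rho> - 1) / (\<rho> + 1)"
  have "norm (X_profile \<alpha> f \<rho>) \<le> M / (1 + \<rho>)"
    using f \<open>0 < \<rho>\<close> by (intro norm_X_profile_le) auto
  have "norm (- (1 + \<i> / \<alpha>) / complex_of_real (1 + \<rho>) * X_profile \<alpha> f \<rho>)
      = norm (1 + \<i> / \<alpha>) / (1 + \<rho>) * norm (X_profile \<alpha> f \<rho>)"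
    using \<open>0 < \<rho>\<close> unfolding norm_mult norm_divide norm_minus_cancel norm_of_real by simp
  also have "\<dots> \<le> norm (1 + \<i> / \<alpha>) / (1 + \<rho>) * (M / (1 + \<rho>))"
    using \<open>0 < \<rho>\<close> by (intro mult_left_mono \<open>norm (X_profile \<alpha> f \<rho>) \<le> M / (1 + \<rho>)\<close>) simp
  also have "\<dots> = norm (1 + \<i> / \<alpha>) * M / ((1 + \<rho>) * (1 + \<rho>))"
    by simp
  also have "\<dots> \<le> norm (1 + \<i> / \<alpha>) * M / (\<rho> * (1 + \<rho>))"
    using \<open>0 < \<rho>\<close> \<open>0 \<le> M\<close> by (intro divide_left_mono mult_right_mono mult_pos_pos) auto
  finally have first: "norm (- (1 + \<i> / \<alpha>) / complex_of_real (1 + \<rho>) * X_profile \<alpha> f \<rho>)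
      \<le> norm (1 + \<i> / \<alpha>) * M / (\<rho> * (1 + \<rho>))" .
  have "norm (cpow_weight \<alpha> \<rho> * complex_of_real (2 / (\<rho> + 1)\<^sup>2) * vector_derivative f (at y))
      = 1 / (1 + \<rho>) * (2 / (\<rho> + 1)\<^sup>2) * norm (vector_derivative f (at y))"
    using \<open>0 < \<rho>\<close> by (simp only: norm_mult norm_of_real norm_cpow_weight abs_of_nonneg
      divide_nonneg_nonneg[OF zero_le_numeral zero_le_power2])
  also have "\<dots> = 1 / (1 + \<rho>) * ((1 - y\<^sup>2) / (2 * \<rho>)) * norm (vector_derivative f (at y))"
    by (simp only: y_def cayley_derivative_eq[OF \<open>0 < \<rho>\<close>])
  also have "\<dots> = (1 - y\<^sup>2) * norm (vector_derivative f (at y)) / (2 * \<rho> * (1 + \<rho>))"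
    by (simp add: field_simps)
  also have "\<dots> \<le> M' / (2 * \<rho> * (1 + \<rho>))"
    using \<open>0 < \<rho>\<close> f' cayley_mem_Ioo[of \<rho>] by (intro divide_right_mono) (auto simp: y_def)
  also have "\<dots> \<le> M' / (\<rho> * (1 + \<rho>))"
    using \<open>0 < \<rho>\<close> \<open>0 \<le> M'\<close> by (intro divide_left_mono mult_right_mono mult_pos_pos) auto
  finally have second: "norm (cpow_weight \<alpha> \<rho> * complex_of_real (2 / (\<rho> + 1)\<^sup>2) * vector_derivative f (at y))
      \<le> M' / (\<rho> * (1 + \<rho>))" .
  show ?thesis
    using norm_triangle_le[OF add_mono[OF first second]]
    by (simp add: X_profile_deriv_def y_def add_divide_distrib)
qed

lemma X_profile_has_derivative:
  assumes "f \<in> X_space" and "0 < \<rho>"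
  shows "(X_profile \<alpha> f has_vector_derivative X_profile_deriv \<alpha> f \<rho>) (at \<rho>)"
proof -
  let ?y = "(\<rho> - 1) / (\<rho> + 1)"
  have "(f has_vector_derivative vector_derivative f (at ?y)) (at ?y)"
    using assms cayley_mem_Ioo[OF assms(2)] by (simp add: X_space_def vector_derivative_works)
  from vector_diff_chain_at[OF cayley_has_derivative[unfolded has_real_derivative_iff_has_vector_derivative] this]
  have "((\<lambda>r. f ((r - 1) / (r + 1))) has_vector_derivative
      (2 / (\<rho> + 1)\<^sup>2) *\<^sub>R vector_derivative f (at ?y)) (at \<rho>)"
    using assms(2) by (simp add: o_def)
  from has_vector_derivative_mult[OF cpow_weight_has_derivative this] show ?thesis
    using assms(2) by (simp add: X_profile_def[abs_def] X_profile_deriv_def scaleR_conv_of_real algebra_simps)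
qed

lemma continuous_on_X_profile:
  assumes "f \<in> X_space"
  shows "continuous_on {0..} (X_profile \<alpha> f)"
proof -
  have "continuous_on {-1..1} f"
    using assms by (simp add: X_space_def)
  then have "continuous_on {0..} (\<lambda>\<rho>. f ((\<rho> - 1) / (\<rho> + 1)))"
    by (rule continuous_on_compose2) (auto intro!: continuous_intros simp: field_simps)
  then show ?thesis
    unfolding X_profile_def[abs_def] by (intro continuous_on_mult continuous_on_cpow_weight)
qed

lemma continuous_on_X_profile_deriv:
  assumes "f \<in> X_space"
  shows "continuous_on {0<..} (X_profile_deriv \<alpha> f)"
proof -
  have "continuous_on {-1<..<1} (\<lambda>y. vector_derivative f (at y))"
    using assms by (simp add: X_space_def)
  then have "continuous_on {0<..} (\<lambda>\<rho>. vector_derivative f (at ((\<rho> - 1) / (\<rho> + 1))))"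
    by (rule continuous_on_compose2) (auto intro!: continuous_intros simp: field_simps)
  moreover have "continuous_on {0<..} (X_profile \<alpha> f)" "continuous_on {0<..} (cpow_weight \<alpha>)"
    by (auto intro: continuous_on_subset[OF continuous_on_X_profile[OF assms]]
        continuous_on_subset[OF continuous_on_cpow_weight])
  ultimately show ?thesis
    unfolding X_profile_deriv_def[abs_def] by (intro continuous_intros) (auto simp: complex_eq_iff)
qed

lemma X_profile_radial_profile:
  assumes "f \<in> X_space"
  obtains M A where "radial_profile (X_profile \<alpha> f) (X_profile_deriv \<alpha> f) M A"
proof -
  obtain M where M: "0 \<le> M" "\<And>y. y \<in> {-1..1} \<Longrightarrow> norm (f y) \<le> M"
    using X_space_bounded[OF assms] by metis
  obtain M' where M': "0 \<le> M'" "\<And>y. y \<in> {-1<..<1} \<Longrightarrow> (1 - y\<^sup>2) * norm (vector_derivative f (at y)) \<le> M'"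
    using X_space_weighted_derivative_bounded[OF assms] by metis
  have "radial_profile (X_profile \<alpha> f) (X_profile_deriv \<alpha> f) M (norm (1 + \<i> / \<alpha>) * M + M')"
  proof
    show "continuous_on {0..} (X_profile \<alpha> f)"
      using assms by (rule continuous_on_X_profile)
    show "continuous_on {0<..} (X_profile_deriv \<alpha> f)"
      using assms by (rule continuous_on_X_profile_deriv)
    show "(X_profile \<alpha> f has_vector_derivative X_profile_deriv \<alpha> f \<rho>) (at \<rho>)" if "0 < \<rho>" for \<rho>
      using assms that by (rule X_profile_has_derivative)
    show "norm (X_profile \<alpha> f \<rho>) \<le> M / (1 + \<rho>)" if "0 \<le> \<rho>" for \<rho>
      using M(2) that by (rule norm_X_profile_le)
    show "norm (X_profile_deriv \<alpha> f \<rho>) \<le> (norm (1 + \<i> / \<alpha>) * M + M') / (\<rho> * (1 + \<rho>))" if "0 < \<rho>" for \<rho>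
      using M(2) M'(2) M(1) M'(1) that by (rule norm_X_profile_deriv_le)
  qed
  then show ?thesis ..
qed

theorem lemma9p5:
  fixes f :: "real \<Rightarrow> complex" and \<alpha> :: real
  assumes "f \<in> X_space" and "\<alpha> \<noteq> 0"
  defines "h \<equiv> (\<lambda>x::real^3. cpow_weight \<alpha> (norm x) * f ((norm x - 1) / (norm x + 1)))"
  shows "h \<in> Lp3 4 \<inter> Hdot1_3"
proof -
  obtain M A where "radial_profile (X_profile \<alpha> f) (X_profile_deriv \<alpha> f) M A"
    using X_profile_radial_profile[OF assms(1)] .
  then interpret radial_profile "X_profile \<alpha> f" "X_profile_deriv \<alpha> f" M A .
  have "h = radial 0"
    by (simp add: h_def radial_def X_profile_def fun_eq_iff)
  then show ?thesis
    using radial_Lp4 radial_Hdot1 by simp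
qed

end
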